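(* Let $m,n\ge 2$ be integers with $(m,n)\ne(2,2)$, let $K_{m,n}$ be the complete bipartite graph with parts of sizes $m$ and $n$, and let $I_{K_{m,n}}$ be its toric ideal over a field $K$. Then $\mathrm{Split}(I_{K_{m,n}})=\mathrm{Split}_{\mathrm{rad}}(I_{K_{m,n}})=3$.
   Context: $K_{m,n}$ has vertex set $\{x_1,\ldots,x_m\}\cup\{y_1,\ldots,y_n\}$ and edges $b_{ij}=\{x_i,y_j\}$ for all $i,j$. For a graph $G$ with vertices $v_1,\ldots,v_N$ and edges $e_1,\ldots,e_M$, the toric ideal $I_G\subset K[e_1,\ldots,e_M]$ is the kernel of $e_k\mapsto t_it_j$ where $e_k=\{v_i,v_j\}$, i.e. the toric ideal of the configuration $\{{\bf a}_e\}$ with ${\bf a}_e\in\{0,1\}^N$ the indicator vector of the two endpoints of $e$. For a toric ideal $I_A$ (of a configuration $A$ of integer vectors with $\ker_{\mathbb{Z}}(A)\cap\mathbb{N}^M=\{{\bf 0}\}$) in $K[x_1,\ldots,x_M]$: $\mathrm{Split}(I_A)$ is the smallest integer $s$ such that there exist toric ideals $I_{A_1},\ldots,I_{A_s}$ in the same polynomial ring with $I_A=I_{A_1}+\cdots+I_{A_s}$ and $I_{A_i}\ne I_A$ for all $i$; $\mathrm{Split}_{\mathrm{rad}}(I_A)$ is the smallest integer $r$ such that there exist toric ideals $I_{A_1},\ldots,I_{A_r}$ with $I_A=\mathrm{rad}(I_{A_1}+\cdots+I_{A_r})$ and $I_{A_i}\ne I_A$ for all $i$. *)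

theory Defs
  imports Main "HOL-Library.Poly_Mapping"
begin

(* Multivariate polynomials over a field 'k in variables of type 'v:
  monomials are exponent vectors 'v <Rightarrow><^sub>0 nat, polynomials are finitely
  supported maps from monomials to coefficients (ring structure from Poly_Mapping). *)

type_synonym ('v, 'k) mpoly = "('v \<Rightarrow>\<^sub>0 nat) \<Rightarrow>\<^sub>0 'k"

definition PR :: "'v set \<Rightarrow> ('v, 'k::field) mpoly set" where
  "PR V = {p :: ('v, 'k) mpoly. \<forall>mon \<in> Poly_Mapping.keys p. Poly_Mapping.keys mon \<subseteq> V}"

definition monomial_x :: "('v \<Rightarrow>\<^sub>0 nat) \<Rightarrow> ('v, 'k::field) mpoly" where
  "monomial_x u = Poly_Mapping.single u 1"

definition is_ideal_in :: "'v set \<Rightarrow> ('v, 'k::field) mpoly set \<Rightarrow> bool" where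
  "is_ideal_in V I \<longleftrightarrow> I \<subseteq> PR V \<and> 0 \<in> I \<and> (\<forall>a\<in>I. \<forall>b\<in>I. a + b \<in> I)
     \<and> (\<forall>a\<in>I. \<forall>r\<in>PR V. r * a \<in> I)"

(* Ideal of K[x_v : v in V] generated by S (S is assumed to lie in PR V). *)
definition ideal_gen :: "'v set \<Rightarrow> ('v, 'k::field) mpoly set \<Rightarrow> ('v, 'k) mpoly set" where
  "ideal_gen V S = \<Inter>{I. is_ideal_in V I \<and> S \<subseteq> I}"

definition radical_in :: "'v set \<Rightarrow> ('v, 'k::field) mpoly set \<Rightarrow> ('v, 'k) mpoly set" where
  "radical_in V I = {f \<in> PR V. \<exists>k. f ^ k \<in> I}"

(* A configuration: to each variable v a vector A v in Z^d (coordinates indexed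
  by nat, zero from d on), with ker_Z(A) <inter> N^V = {0}. *)
definition toric_config :: "'v set \<Rightarrow> ('v \<Rightarrow> nat \<Rightarrow> int) \<Rightarrow> bool" where
  "toric_config V A \<longleftrightarrow>
     (\<exists>d. \<forall>v\<in>V. \<forall>r\<ge>d. A v r = 0) \<and>
     (\<forall>u :: 'v \<Rightarrow> nat. (\<forall>r. (\<Sum>v\<in>V. int (u v) * A v r) = 0) \<longrightarrow> (\<forall>v\<in>V. u v = 0))"

definition toric_ideal :: "'v set \<Rightarrow> ('v \<Rightarrow> nat \<Rightarrow> int) \<Rightarrow> ('v, 'k::field) mpoly set" where
  "toric_ideal V A = ideal_gen V
     {monomial_x u - monomial_x w | u w. Poly_Mapping.keys u \<subseteq> V \<and> Poly_Mapping.keys w \<subseteq> V \<and>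
        (\<forall>r. (\<Sum>v\<in>V. int (Poly_Mapping.lookup u v) * A v r) = (\<Sum>v\<in>V. int (Poly_Mapping.lookup w v) * A v r))}"

definition splits_into :: "'k::field itself \<Rightarrow> 'v set \<Rightarrow> ('v \<Rightarrow> nat \<Rightarrow> int) \<Rightarrow> nat \<Rightarrow> bool" where
  "splits_into (TYPE('k)) V A s \<longleftrightarrow>
     (\<exists>As :: nat \<Rightarrow> 'v \<Rightarrow> nat \<Rightarrow> int.
        (\<forall>i<s. toric_config V (As i)) \<and>
        (\<forall>i<s. (toric_ideal V (As i) :: ('v,'k) mpoly set) \<noteq> toric_ideal V A) \<and>
        (toric_ideal V A :: ('v,'k) mpoly set) = ideal_gen V (\<Union>i<s. toric_ideal V (As i)))"

definition rad_splits_into :: "'k::field itself \<Rightarrow> 'v set \<Rightarrow> ('v \<Rightarrow> nat \<Rightarrow> int) \<Rightarrow> nat \<Rightarrow> bool" where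
  "rad_splits_into (TYPE('k)) V A r \<longleftrightarrow>
     (\<exists>As :: nat \<Rightarrow> 'v \<Rightarrow> nat \<Rightarrow> int.
        (\<forall>i<r. toric_config V (As i)) \<and>
        (\<forall>i<r. (toric_ideal V (As i) :: ('v,'k) mpoly set) \<noteq> toric_ideal V A) \<and>
        (toric_ideal V A :: ('v,'k) mpoly set)
           = radical_in V (ideal_gen V (\<Union>i<r. toric_ideal V (As i))))"

definition split_number :: "'k::field itself \<Rightarrow> 'v set \<Rightarrow> ('v \<Rightarrow> nat \<Rightarrow> int) \<Rightarrow> nat" where
  "split_number k V A = (LEAST s. splits_into k V A s)"

definition rad_split_number :: "'k::field itself \<Rightarrow> 'v set \<Rightarrow> ('v \<Rightarrow> nat \<Rightarrow> int) \<Rightarrow> nat" where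
  "rad_split_number k V A = (LEAST r. rad_splits_into k V A r)"

(* K_{m,n}: edge b_ij = (i,j), i<m, j<n (0-indexed); vertex x_i is coordinate i,
  vertex y_j is coordinate m+j; a_e is the indicator vector of the endpoints. *)
definition Kmn_edges :: "nat \<Rightarrow> nat \<Rightarrow> (nat \<times> nat) set" where
  "Kmn_edges m n = {0..<m} \<times> {0..<n}"

definition Kmn_config :: "nat \<Rightarrow> nat \<Rightarrow> nat \<times> nat \<Rightarrow> nat \<Rightarrow> int" where
  "Kmn_config m n e r = (if r = fst e \<or> r = m + snd e then 1 else 0)"

end

(*
  The toric ideal I_A of K_{m,n} is radical, being the kernel of the monomial map x^u |-> t^(Au) into
  a Laurent polynomial ring, and it is generated by the 2 x 2 minors x_ac x_bd - x_ad x_bc: two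
  contingency tables with the same margins are connected by such exchanges.

  Three summands suffice: marking an edge E by an extra coordinate gives a toric ideal inside I_A that
  contains every minor avoiding E but not the minors through E.  Three edges in one row (or, when
  n = 2 and hence m >= 3, in one column) are never all used by a minor.

  Two summands do not suffice, even up to radical.  Each summand I_B is a proper subideal of I_A, so B
  violates the relation of some minor.  For each B the pairs of columns (resp. rows) satisfying the
  minor relations form equivalence relations, and a square covered by two equivalence relations is a
  class of one of them; hence some minor f with distinct rows and columns is violated by both
  configurations.  Then (x_ad x_bc)^k is alone in its fibre for both, so every polynomial of
  I_B1 + I_B2 has coefficient 0 there, while f^k has coefficient (-1)^k.
*)
theory Submission
  imports Defs
begin

abbreviation keys :: "('a \<Rightarrow>\<^sub>0 'b::zero) \<Rightarrow> 'a set" where "keys \<equiv> Poly_Mapping.keys"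
abbreviation lookup :: "('a \<Rightarrow>\<^sub>0 'b::zero) \<Rightarrow> 'a \<Rightarrow> 'b" where "lookup \<equiv> Poly_Mapping.lookup"
abbreviation single :: "'a \<Rightarrow> 'b::zero \<Rightarrow> 'a \<Rightarrow>\<^sub>0 'b" where "single \<equiv> Poly_Mapping.single"

lemma sum_single_lookup: "(\<Sum>a\<in>keys p. single a (lookup p a)) = p"
proof (rule poly_mapping_eqI)
  show "lookup (\<Sum>a\<in>keys p. single a (lookup p a)) x = lookup p x" for x
    by (cases "x \<in> keys p") (simp_all add: lookup_sum lookup_single when_def in_keys_iff)
qed

lemma sum_keys_superset:
  assumes "finite S" "keys p \<subseteq> S" "\<And>x. f x 0 = 0"
  shows "(\<Sum>x\<in>keys p. f x (lookup p x)) = (\<Sum>x\<in>S. f x (lookup p x))"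
  using assms by (intro sum.mono_neutral_left) (auto simp: in_keys_iff)

lemma sum_keys_add:
  assumes "\<And>x. f x 0 = 0" "\<And>x a b. f x (a + b) = f x a + f x b"
  shows "(\<Sum>x\<in>keys (p + q). f x (lookup (p + q) x))
    = (\<Sum>x\<in>keys p. f x (lookup p x)) + (\<Sum>x\<in>keys q. f x (lookup q x))"
proof -
  let ?S = "keys p \<union> keys q"
  have "(\<Sum>x\<in>keys (p + q). f x (lookup (p + q) x)) = (\<Sum>x\<in>?S. f x (lookup (p + q) x))"
    using keys_add[of p q] assms(1) by (intro sum_keys_superset) auto
  also have "\<dots> = (\<Sum>x\<in>?S. f x (lookup p x)) + (\<Sum>x\<in>?S. f x (lookup q x))"
    by (simp add: lookup_add assms(2) sum.distrib)
  also have "\<dots> = (\<Sum>x\<in>keys p. f x (lookup p x)) + (\<Sum>x\<in>keys q. f x (lookup q x))"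
    using sum_keys_superset[of ?S p f] sum_keys_superset[of ?S q f] assms(1) by simp
  finally show ?thesis .
qed

lemma mult_eq_sum_single:
  "r * a = (\<Sum>x\<in>keys r. \<Sum>y\<in>keys a. single (x + y) (lookup r x * lookup a y))"
proof -
  have "r * a = (\<Sum>x\<in>keys r. single x (lookup r x)) * (\<Sum>y\<in>keys a. single y (lookup a y))"
    by (simp only: sum_single_lookup)
  then show ?thesis by (simp add: sum_product mult_single)
qed

definition coeff_sum :: "'a set \<Rightarrow> ('a \<Rightarrow>\<^sub>0 'b::comm_monoid_add) \<Rightarrow> 'b" where
  "coeff_sum C p = (\<Sum>x\<in>keys p. lookup p x when x \<in> C)"

lemma coeff_sum_add: "coeff_sum C (p + q) = coeff_sum C p + coeff_sum C q"
  unfolding coeff_sum_def by (rule sum_keys_add) (simp_all add: when_add_distrib)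

lemma coeff_sum_single [simp]: "coeff_sum C (single x c) = (c when x \<in> C)"
  by (simp add: coeff_sum_def)

lemma coeff_sum_zero [simp]: "coeff_sum C 0 = 0"
  by (simp add: coeff_sum_def)

lemma coeff_sum_sum: "coeff_sum C (sum f I) = (\<Sum>i\<in>I. coeff_sum C (f i))"
  by (induction I rule: infinite_finite_induct) (simp_all add: coeff_sum_add)

lemma coeff_sum_diff: "coeff_sum C (p - q) = coeff_sum C p - coeff_sum C (q :: 'a \<Rightarrow>\<^sub>0 'b::ab_group_add)"
  by (metis add_diff_cancel coeff_sum_add diff_add_cancel)

lemma coeff_sum_singleton: "coeff_sum {x} p = lookup p x"
  by (cases "x \<in> keys p") (simp_all add: coeff_sum_def when_def in_keys_iff)

lemma coeff_sum_mult:
  "coeff_sum C (r * a) = (\<Sum>x\<in>keys r. lookup r x * coeff_sum {y. x + y \<in> C} a)"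
  unfolding mult_eq_sum_single coeff_sum_sum coeff_sum_single
  by (simp add: coeff_sum_def sum_distrib_left mult_when)

definition map_monomials :: "('a \<Rightarrow> 'c) \<Rightarrow> ('a \<Rightarrow>\<^sub>0 'b::comm_monoid_add) \<Rightarrow> 'c \<Rightarrow>\<^sub>0 'b" where
  "map_monomials h p = (\<Sum>x\<in>keys p. single (h x) (lookup p x))"

lemma map_monomials_add: "map_monomials h (p + q) = map_monomials h p + map_monomials h q"
  unfolding map_monomials_def by (rule sum_keys_add) (simp_all add: single_add)

lemma map_monomials_zero [simp]: "map_monomials h 0 = 0"
  by (simp add: map_monomials_def)

lemma map_monomials_single [simp]: "map_monomials h (single x c) = single (h x) c"
  by (simp add: map_monomials_def)

lemma map_monomials_sum: "map_monomials h (sum f I) = (\<Sum>i\<in>I. map_monomials h (f i))"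
  by (induction I rule: infinite_finite_induct) (simp_all add: map_monomials_add)

lemma map_monomials_diff:
  "map_monomials h (p - q) = map_monomials h p - map_monomials h (q :: 'a \<Rightarrow>\<^sub>0 'b::ab_group_add)"
  by (metis add_diff_cancel diff_add_cancel map_monomials_add)

lemma map_monomials_mult:
  assumes "\<And>x y. h (x + y) = h x + h y"
  shows "map_monomials h (r * a) = map_monomials h r * map_monomials h a"
proof -
  have "map_monomials h (r * a) = (\<Sum>x\<in>keys r. \<Sum>y\<in>keys a. single (h x + h y) (lookup r x * lookup a y))"
    by (subst mult_eq_sum_single) (simp add: map_monomials_sum assms)
  then show ?thesis
    by (simp add: map_monomials_def sum_product mult_single)
qed

lemma map_monomials_one: "h 0 = 0 \<Longrightarrow> map_monomials h 1 = 1"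
  by (metis map_monomials_single single_one)

lemma map_monomials_power:
  assumes "\<And>x y. h (x + y) = h x + h y" "h 0 = 0"
  shows "map_monomials h (r ^ k) = map_monomials h r ^ k"
  by (induction k) (simp_all add: map_monomials_mult[OF assms(1)] map_monomials_one[of h, OF assms(2)])

lemma lookup_map_monomials: "lookup (map_monomials h p) d = coeff_sum (h -` {d}) p"
  by (simp add: map_monomials_def coeff_sum_def lookup_sum lookup_single when_def eq_commute)

lemma PR_zero [simp]: "0 \<in> PR V"
  by (simp add: PR_def)

lemma PR_add: "p \<in> PR V \<Longrightarrow> q \<in> PR V \<Longrightarrow> p + q \<in> PR V"
  unfolding PR_def using keys_add[of p q] by blast

lemma PR_diff: "p \<in> PR V \<Longrightarrow> q \<in> PR V \<Longrightarrow> p - q \<in> PR V"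
  unfolding PR_def using keys_diff[of p q] by blast

lemma PR_single: "keys x \<subseteq> V \<Longrightarrow> single x c \<in> PR V"
  unfolding PR_def by simp

lemma PR_mult:
  assumes "p \<in> PR V" "q \<in> PR V" shows "p * q \<in> PR V"
  unfolding PR_def mem_Collect_eq
proof
  fix x assume "x \<in> keys (p * q)"
  then obtain a b where ab: "x = a + b" "a \<in> keys p" "b \<in> keys q" using keys_mult[of p q] by blast
  then have "keys a \<subseteq> V" "keys b \<subseteq> V" using assms by (auto simp: PR_def)
  then show "keys x \<subseteq> V" using ab(1) keys_add[of a b] by blast
qed

lemma PR_keys_subset: "p \<in> PR V \<Longrightarrow> x \<in> keys p \<Longrightarrow> keys x \<subseteq> V"
  unfolding PR_def by blast

lemma ideal_subset_PR: "is_ideal_in V I \<Longrightarrow> I \<subseteq> PR V"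
  by (simp add: is_ideal_in_def)

lemma ideal_zero: "is_ideal_in V I \<Longrightarrow> 0 \<in> I"
  by (simp add: is_ideal_in_def)

lemma ideal_add: "is_ideal_in V I \<Longrightarrow> a \<in> I \<Longrightarrow> b \<in> I \<Longrightarrow> a + b \<in> I"
  by (simp add: is_ideal_in_def)

lemma ideal_mult: "is_ideal_in V I \<Longrightarrow> a \<in> I \<Longrightarrow> r \<in> PR V \<Longrightarrow> r * a \<in> I"
  by (simp add: is_ideal_in_def)

lemma is_ideal_inI:
  assumes "I \<subseteq> PR V" "0 \<in> I" "\<And>a b. a \<in> I \<Longrightarrow> b \<in> I \<Longrightarrow> a + b \<in> I"
    and "\<And>a r. a \<in> I \<Longrightarrow> r \<in> PR V \<Longrightarrow> r * a \<in> I"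
  shows "is_ideal_in V I"
  using assms unfolding is_ideal_in_def by blast

lemma is_ideal_in_PR: "is_ideal_in V (PR V)"
  by (rule is_ideal_inI) (simp_all add: PR_add PR_mult)

lemma ideal_gen_subset: "S \<subseteq> ideal_gen V S"
  unfolding ideal_gen_def by blast

lemma ideal_gen_least: "is_ideal_in V I \<Longrightarrow> S \<subseteq> I \<Longrightarrow> ideal_gen V S \<subseteq> I"
  unfolding ideal_gen_def by blast

lemma is_ideal_in_ideal_gen:
  assumes "S \<subseteq> PR V" shows "is_ideal_in V (ideal_gen V S)"
proof (rule is_ideal_inI)
  show "ideal_gen V S \<subseteq> PR V" by (rule ideal_gen_least[OF is_ideal_in_PR assms])
  show "0 \<in> ideal_gen V S"
    unfolding ideal_gen_def by (blast intro: ideal_zero)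
  show "a + b \<in> ideal_gen V S" if "a \<in> ideal_gen V S" "b \<in> ideal_gen V S" for a b
    using that unfolding ideal_gen_def by (blast intro: ideal_add)
  show "r * a \<in> ideal_gen V S" if "a \<in> ideal_gen V S" "r \<in> PR V" for a r
    using that unfolding ideal_gen_def by (blast intro: ideal_mult)
qed

lemma ideal_mult_single:
  "is_ideal_in V I \<Longrightarrow> a \<in> I \<Longrightarrow> keys x \<subseteq> V \<Longrightarrow> single x c * a \<in> I"
  by (simp add: is_ideal_in_def PR_single)

lemma ideal_shift_binomial:
  assumes "is_ideal_in V I" "single u 1 - single w 1 \<in> I" "keys x \<subseteq> V"
  shows "single (x + u) 1 - single (x + w) 1 \<in> I"
  using ideal_mult_single[OF assms(1,2,3), of 1] by (simp add: right_diff_distrib mult_single)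

definition config_deg :: "'v set \<Rightarrow> ('v \<Rightarrow> nat \<Rightarrow> int) \<Rightarrow> ('v \<Rightarrow>\<^sub>0 nat) \<Rightarrow> nat \<Rightarrow> int" where
  "config_deg V A x r = (\<Sum>v\<in>V. int (lookup x v) * A v r)"

lemma config_deg_add: "config_deg V A (x + y) r = config_deg V A x r + config_deg V A y r"
  by (simp add: config_deg_def lookup_add distrib_right sum.distrib)

lemma config_deg_zero [simp]: "config_deg V A 0 r = 0"
  by (simp add: config_deg_def)

lemma config_deg_single:
  assumes "finite V" "v \<in> V"
  shows "config_deg V A (single v k) r = int k * A v r"
proof -
  have "int (lookup (single v k) v') * A v' r = (if v = v' then int k * A v r else 0)" for v'
    by (simp add: lookup_single when_def)
  then show ?thesis using assms by (simp add: config_deg_def)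
qed

lemma toric_ideal_eq_ideal_gen:
  "toric_ideal V A = ideal_gen V {single u 1 - single w 1 | u w.
     keys u \<subseteq> V \<and> keys w \<subseteq> V \<and> config_deg V A u = config_deg V A w}"
  by (simp add: toric_ideal_def monomial_x_def config_deg_def fun_eq_iff)

lemma is_ideal_in_toric_ideal: "is_ideal_in V (toric_ideal V A)"
  unfolding toric_ideal_eq_ideal_gen by (rule is_ideal_in_ideal_gen) (auto intro: PR_diff PR_single)

lemma toric_ideal_subset_PR: "toric_ideal V A \<subseteq> PR V"
  by (rule ideal_subset_PR[OF is_ideal_in_toric_ideal])

lemma binomial_in_toric_ideal:
  "keys u \<subseteq> V \<Longrightarrow> keys w \<subseteq> V \<Longrightarrow> config_deg V A u = config_deg V A w \<Longrightarrow>
    single u 1 - single w 1 \<in> toric_ideal V A"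
  unfolding toric_ideal_eq_ideal_gen by (rule subsetD[OF ideal_gen_subset]) blast

lemma toric_ideal_subsetI:
  assumes "is_ideal_in V J"
    and "\<And>u w. keys u \<subseteq> V \<Longrightarrow> keys w \<subseteq> V \<Longrightarrow> config_deg V A u = config_deg V A w \<Longrightarrow>
      single u 1 - single w 1 \<in> J"
  shows "toric_ideal V A \<subseteq> J"
  unfolding toric_ideal_eq_ideal_gen using assms by (intro ideal_gen_least) auto

lemma coeff_sum_eq_0_obtain_key:
  assumes "coeff_sum C f = 0" "u \<in> keys f" "u \<in> C"
  obtains w where "w \<in> keys f" "w \<noteq> u" "w \<in> C"
proof -
  have "\<exists>w\<in>keys f. w \<noteq> u \<and> w \<in> C"
  proof (rule ccontr)
    assume "\<not> ?thesis"
    then have "coeff_sum C f = (\<Sum>x\<in>keys f. lookup f u when x = u)"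
      using assms(3) unfolding coeff_sum_def by (intro sum.cong) (auto simp: when_def)
    also have "\<dots> = lookup f u" using assms(2) by (simp add: when_def)
    finally show False using assms(1,2) by (simp add: in_keys_iff)
  qed
  then show ?thesis using that by blast
qed

lemma keys_move_coeff:
  assumes "w \<in> keys f" "w \<noteq> u"
  shows "keys (f - single u (lookup f u) + single w (lookup f u)) \<subseteq> keys f - {u}"
proof
  fix x assume "x \<in> keys (f - single u (lookup f u) + single w (lookup f u))"
  then show "x \<in> keys f - {u}"
    using assms by (cases "x = w"; cases "x = u") (auto simp: in_keys_iff lookup_add lookup_minus lookup_single)
qed

text \<open>Moving the coefficient of \<open>x\<^sup>u\<close> onto another monomial \<open>x\<^sup>w\<close> of the same degree changes \<open>f\<close>
  by a multiple of \<open>x\<^sup>u - x\<^sup>w\<close> and shrinks its support.\<close>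

lemma toric_ideal_memI:
  fixes f :: "('v, 'k::field) mpoly"
  assumes "f \<in> PR V"
    and "\<And>u. u \<in> keys f \<Longrightarrow> coeff_sum {w. config_deg V A w = config_deg V A u} f = 0"
  shows "f \<in> toric_ideal V A"
  using assms
proof (induction "card (keys f)" arbitrary: f rule: less_induct)
  case less
  let ?F = "\<lambda>u. {w. config_deg V A w = config_deg V A u}"
  have I: "is_ideal_in V (toric_ideal V A :: ('v, 'k) mpoly set)" by (rule is_ideal_in_toric_ideal)
  show ?case
  proof (cases "f = 0")
    case True
    then show ?thesis using ideal_zero[OF I] by simp
  next
    case False
    then obtain u where u: "u \<in> keys f" by (metis all_not_in_conv keys_eq_empty)
    obtain w where w: "w \<in> keys f" "w \<noteq> u" "config_deg V A w = config_deg V A u"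
      using coeff_sum_eq_0_obtain_key[OF less.prems(2)[OF u] u] by auto
    have uV: "keys u \<subseteq> V" and wV: "keys w \<subseteq> V"
      using PR_keys_subset[OF less.prems(1)] u w(1) by auto
    define c where "c = lookup f u"
    define f' where "f' = f - single u c + single w c"
    have keys_f': "keys f' \<subseteq> keys f - {u}"
      unfolding f'_def c_def by (rule keys_move_coeff[OF w(1,2)])
    then have "card (keys f') < card (keys f)"
      using card_mono[OF _ keys_f'] card_Diff1_less[OF _ u] by (meson finite_Diff finite_keys le_less_trans)
    moreover have "f' \<in> PR V"
      unfolding f'_def by (intro PR_add PR_diff less.prems(1) PR_single uV wV)
    moreover have "coeff_sum (?F u') f' = 0" if "u' \<in> keys f'" for u'
    proof -
      have "coeff_sum (?F u') f' = coeff_sum (?F u') f - (c when u \<in> ?F u') + (c when w \<in> ?F u')"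
        by (simp only: f'_def coeff_sum_add coeff_sum_diff coeff_sum_single)
      moreover have "coeff_sum (?F u') f = 0"
        using keys_f' that by (intro less.prems(2)) blast
      ultimately show ?thesis using w(3) by simp
    qed
    ultimately have "f' \<in> toric_ideal V A" by (rule less.hyps)
    moreover have "single 0 c * (single u 1 - single w 1) \<in> toric_ideal V A"
      by (rule ideal_mult_single[OF I binomial_in_toric_ideal[OF uV wV w(3)[symmetric]]]) simp
    ultimately have "f' + single 0 c * (single u 1 - single w 1) \<in> toric_ideal V A"
      by (rule ideal_add[OF I])
    then show ?thesis by (simp add: f'_def right_diff_distrib mult_single)
  qed
qed

definition deg_saturated :: "'v set \<Rightarrow> ('v \<Rightarrow> nat \<Rightarrow> int) \<Rightarrow> ('v \<Rightarrow>\<^sub>0 nat) set \<Rightarrow> bool" where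
  "deg_saturated V A C \<longleftrightarrow> (\<forall>x y. keys x \<subseteq> V \<longrightarrow> keys y \<subseteq> V \<longrightarrow>
     config_deg V A x = config_deg V A y \<longrightarrow> (x \<in> C \<longleftrightarrow> y \<in> C))"

text \<open>An ideal containing \<open>I\<^sub>A\<close> for every \<open>A \<in> As\<close>, hence their sum: it certifies
  non-membership in sums of toric ideals.\<close>

definition fibre_balanced :: "'v set \<Rightarrow> ('v \<Rightarrow> nat \<Rightarrow> int) set \<Rightarrow> ('v, 'k::field) mpoly set" where
  "fibre_balanced V As = {p \<in> PR V. \<forall>C. (\<forall>A\<in>As. deg_saturated V A C) \<longrightarrow> coeff_sum C p = 0}"

lemma deg_saturated_shift:
  assumes "deg_saturated V A C" "keys x \<subseteq> V"
  shows "deg_saturated V A {y. x + y \<in> C}"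
  unfolding deg_saturated_def
proof (intro allI impI)
  fix y z assume "keys y \<subseteq> V" "keys z \<subseteq> V" and yz: "config_deg V A y = config_deg V A z"
  then have "keys (x + y) \<subseteq> V" "keys (x + z) \<subseteq> V"
    using keys_add[of x y] keys_add[of x z] assms(2) by blast+
  moreover have "config_deg V A (x + y) = config_deg V A (x + z)"
    using yz by (simp add: fun_eq_iff config_deg_add)
  ultimately have "x + y \<in> C \<longleftrightarrow> x + z \<in> C"
    using assms(1) unfolding deg_saturated_def by blast
  then show "y \<in> {y. x + y \<in> C} \<longleftrightarrow> z \<in> {y. x + y \<in> C}" by simp
qed

lemma is_ideal_in_fibre_balanced: "is_ideal_in V (fibre_balanced V As)"
proof (rule is_ideal_inI)
  show "a + b \<in> fibre_balanced V As" if "a \<in> fibre_balanced V As" "b \<in> fibre_balanced V As" for a b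
    using that by (simp add: fibre_balanced_def PR_add coeff_sum_add)
  show "r * a \<in> fibre_balanced V As" if a: "a \<in> fibre_balanced V As" and r: "r \<in> PR V" for a r
  proof -
    have "coeff_sum C (r * a) = 0" if C: "\<forall>A\<in>As. deg_saturated V A C" for C
    proof -
      have "coeff_sum {y. x + y \<in> C} a = 0" if "x \<in> keys r" for x
      proof -
        have "\<forall>A\<in>As. deg_saturated V A {y. x + y \<in> C}"
          using C deg_saturated_shift PR_keys_subset[OF r that] by blast
        then show ?thesis using a by (simp add: fibre_balanced_def)
      qed
      then show ?thesis by (simp add: coeff_sum_mult)
    qed
    then show ?thesis using a r by (simp add: fibre_balanced_def PR_mult)
  qed
qed (auto simp: fibre_balanced_def)

lemma toric_ideal_subset_fibre_balanced:
  fixes V :: "'v set"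
  assumes "A \<in> As" shows "toric_ideal V A \<subseteq> (fibre_balanced V As :: ('v, 'k::field) mpoly set)"
proof (rule toric_ideal_subsetI[OF is_ideal_in_fibre_balanced])
  fix u w assume uw: "keys u \<subseteq> V" "keys w \<subseteq> V" "config_deg V A u = config_deg V A w"
  show "(single u 1 - single w 1 :: ('v, 'k) mpoly) \<in> fibre_balanced V As"
    unfolding fibre_balanced_def
  proof (intro CollectI conjI allI impI)
    show "(single u 1 - single w 1 :: ('v, 'k) mpoly) \<in> PR V" using uw by (simp add: PR_diff PR_single)
    fix C assume "\<forall>A\<in>As. deg_saturated V A C"
    then have "u \<in> C \<longleftrightarrow> w \<in> C" using assms uw unfolding deg_saturated_def by blast
    then show "coeff_sum C (single u 1 - single w 1 :: ('v, 'k) mpoly) = 0" by (simp add: coeff_sum_diff)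
  qed
qed

lemma ideal_gen_toric_ideals_subset_fibre_balanced:
  "ideal_gen V (\<Union>i\<in>I. toric_ideal V (As i)) \<subseteq> fibre_balanced V (As ` I)"
  by (intro ideal_gen_least[OF is_ideal_in_fibre_balanced] UN_least toric_ideal_subset_fibre_balanced) simp

lemma binomial_in_toric_ideal_iff:
  assumes "keys u \<subseteq> V" "keys w \<subseteq> V"
  shows "single u 1 - single w 1 \<in> (toric_ideal V A :: ('v, 'k::field) mpoly set)
    \<longleftrightarrow> config_deg V A u = config_deg V A w"
proof
  let ?C = "{x. config_deg V A x = config_deg V A u}"
  assume "single u 1 - single w 1 \<in> (toric_ideal V A :: ('v, 'k) mpoly set)"
  then have "single u 1 - single w 1 \<in> (fibre_balanced V {A} :: ('v, 'k) mpoly set)"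
    using toric_ideal_subset_fibre_balanced by blast
  moreover have "deg_saturated V A ?C" by (simp add: deg_saturated_def)
  ultimately have "coeff_sum ?C (single u 1 - single w 1 :: ('v, 'k) mpoly) = 0"
    by (simp add: fibre_balanced_def)
  then show "config_deg V A u = config_deg V A w"
    by (rule contrapos_pp) (simp add: coeff_sum_diff)
qed (rule binomial_in_toric_ideal[OF assms])

section \<open>Toric ideals are radical\<close>

text \<open>\<open>x^u \<mapsto> t^(A u)\<close> is a monomial map into Laurent polynomials, a domain; \<open>I\<^sub>A\<close> is its kernel.\<close>

definition deg_monomial :: "'v set \<Rightarrow> ('v \<Rightarrow> nat \<Rightarrow> int) \<Rightarrow> ('v \<Rightarrow>\<^sub>0 nat) \<Rightarrow> nat \<Rightarrow>\<^sub>0 int" where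
  "deg_monomial V A x = Abs_poly_mapping (config_deg V A x)"

lemma lookup_deg_monomial:
  assumes "toric_config V A"
  shows "lookup (deg_monomial V A x) = config_deg V A x"
proof -
  obtain d where d: "\<forall>v\<in>V. \<forall>r\<ge>d. A v r = 0"
    using assms by (auto simp: toric_config_def)
  then have "config_deg V A x r = 0" if "r \<ge> d" for r
    using that by (simp add: config_deg_def)
  then have "{r. config_deg V A x r \<noteq> 0} \<subseteq> {..<d}"
    using not_less by blast
  then show ?thesis
    by (simp add: deg_monomial_def finite_subset)
qed

lemma deg_monomial_eq_iff:
  "toric_config V A \<Longrightarrow> deg_monomial V A x = deg_monomial V A y \<longleftrightarrow> config_deg V A x = config_deg V A y"
  by (simp add: poly_mapping_eq_iff lookup_deg_monomial)

lemma deg_monomial_add: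
  "toric_config V A \<Longrightarrow> deg_monomial V A (x + y) = deg_monomial V A x + deg_monomial V A y"
  by (rule poly_mapping_eqI) (simp add: lookup_add lookup_deg_monomial config_deg_add)

lemma deg_monomial_zero: "toric_config V A \<Longrightarrow> deg_monomial V A 0 = 0"
  by (rule poly_mapping_eqI) (simp add: lookup_deg_monomial)

lemma is_ideal_in_kernel:
  fixes h :: "('v \<Rightarrow>\<^sub>0 nat) \<Rightarrow> 'w::comm_monoid_add"
  assumes "\<And>x y. h (x + y) = h x + h y"
  shows "is_ideal_in V {f \<in> PR V. map_monomials h f = (0 :: 'w \<Rightarrow>\<^sub>0 'k::field)}"
proof (rule is_ideal_inI)
  show "a + b \<in> {f \<in> PR V. map_monomials h f = 0}"
    if "a \<in> {f \<in> PR V. map_monomials h f = 0}" "b \<in> {f \<in> PR V. map_monomials h f = 0}" for a b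
    using that by (simp add: PR_add map_monomials_add)
  show "r * a \<in> {f \<in> PR V. map_monomials h f = 0}"
    if "a \<in> {f \<in> PR V. map_monomials h f = 0}" "r \<in> PR V" for a r
    using that by (simp add: PR_mult map_monomials_mult[OF assms])
qed auto

lemma toric_ideal_eq_kernel:
  fixes V :: "'v set"
  assumes A: "toric_config V A"
  shows "toric_ideal V A = {f \<in> PR V. map_monomials (deg_monomial V A) f = (0 :: (nat \<Rightarrow>\<^sub>0 int) \<Rightarrow>\<^sub>0 'k::field)}"
    (is "_ = ?K")
proof
  show "toric_ideal V A \<subseteq> ?K"
  proof (rule toric_ideal_subsetI[OF is_ideal_in_kernel[OF deg_monomial_add[OF A]]])
    fix u w assume "keys u \<subseteq> V" "keys w \<subseteq> V" "config_deg V A u = config_deg V A w"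
    then show "single u 1 - single w 1 \<in> ?K"
      using deg_monomial_eq_iff[OF A, of u w] by (simp add: map_monomials_diff PR_diff PR_single)
  qed
  show "?K \<subseteq> toric_ideal V A"
  proof
    fix f assume f: "f \<in> ?K"
    show "f \<in> toric_ideal V A"
    proof (rule toric_ideal_memI)
      show "f \<in> PR V" using f by simp
      fix u
      have "deg_monomial V A -` {deg_monomial V A u} = {w. config_deg V A w = config_deg V A u}"
        by (auto simp: deg_monomial_eq_iff[OF A])
      then have "coeff_sum {w. config_deg V A w = config_deg V A u} f
          = lookup (map_monomials (deg_monomial V A) f) (deg_monomial V A u)"
        by (simp add: lookup_map_monomials)
      also have "\<dots> = 0" using f by simp
      finally show "coeff_sum {w. config_deg V A w = config_deg V A u} f = 0" .
    qed
  qed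
qed

lemma radical_toric_ideal:
  assumes A: "toric_config V A"
  shows "radical_in V (toric_ideal V A :: ('v, 'k::field) mpoly set) = toric_ideal V A"
proof (intro equalityI subsetI)
  fix f assume "f \<in> radical_in V (toric_ideal V A :: ('v, 'k) mpoly set)"
  then obtain k where f: "f \<in> PR V" "f ^ k \<in> toric_ideal V A" by (auto simp: radical_in_def)
  have "map_monomials (deg_monomial V A) (f ^ k) = 0"
    using f(2) unfolding toric_ideal_eq_kernel[OF A] by simp
  then have "map_monomials (deg_monomial V A) f ^ k = 0"
    by (simp only: map_monomials_power[OF deg_monomial_add[OF A] deg_monomial_zero[OF A]])
  then show "f \<in> toric_ideal V A"
    using f(1) unfolding toric_ideal_eq_kernel[OF A] by simp
next
  fix f assume "f \<in> (toric_ideal V A :: ('v, 'k) mpoly set)"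
  moreover from this have "f \<in> PR V" using toric_ideal_subset_PR by blast
  ultimately show "f \<in> radical_in V (toric_ideal V A)"
    unfolding radical_in_def by (auto intro: exI[of _ 1])
qed

lemma mem_Kmn_edges [simp]: "(i, j) \<in> Kmn_edges m n \<longleftrightarrow> i < m \<and> j < n"
  by (simp add: Kmn_edges_def)

lemma finite_Kmn_edges [simp]: "finite (Kmn_edges m n)"
  by (simp add: Kmn_edges_def)

lemma toric_config_nonneg:
  assumes "finite V" and d: "\<And>v r. v \<in> V \<Longrightarrow> d \<le> r \<Longrightarrow> A v r = 0"
    and nonneg: "\<And>v r. v \<in> V \<Longrightarrow> 0 \<le> A v r" and pos: "\<And>v. v \<in> V \<Longrightarrow> \<exists>r. 0 < A v r"
  shows "toric_config V A"
  unfolding toric_config_def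
proof (intro conjI allI impI ballI)
  show "\<exists>d. \<forall>v\<in>V. \<forall>r\<ge>d. A v r = 0" using d by blast
next
  fix u :: "'a \<Rightarrow> nat" and v assume zero: "\<forall>r. (\<Sum>v\<in>V. int (u v) * A v r) = 0" and v: "v \<in> V"
  obtain r where r: "0 < A v r" using pos[OF v] by blast
  have "int (u v) * A v r \<le> (\<Sum>v\<in>V. int (u v) * A v r)"
    using assms(1) v nonneg by (intro member_le_sum) simp_all
  then have "int (u v) * A v r \<le> 0" using zero by simp
  then show "u v = 0" using r by (simp add: mult_le_0_iff)
qed

lemma toric_config_Kmn: "toric_config (Kmn_edges m n) (Kmn_config m n)"
  by (rule toric_config_nonneg[where d = "m + n"]) (auto simp: Kmn_edges_def Kmn_config_def)

definition row_sum :: "nat \<Rightarrow> (nat \<times> nat \<Rightarrow>\<^sub>0 nat) \<Rightarrow> nat \<Rightarrow> nat" where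
  "row_sum n x i = (\<Sum>j<n. lookup x (i, j))"

definition col_sum :: "nat \<Rightarrow> (nat \<times> nat \<Rightarrow>\<^sub>0 nat) \<Rightarrow> nat \<Rightarrow> nat" where
  "col_sum m x j = (\<Sum>i<m. lookup x (i, j))"

definition same_margins :: "nat \<Rightarrow> nat \<Rightarrow> (nat \<times> nat \<Rightarrow>\<^sub>0 nat) \<Rightarrow> (nat \<times> nat \<Rightarrow>\<^sub>0 nat) \<Rightarrow> bool" where
  "same_margins m n x y \<longleftrightarrow>
     (\<forall>i<m. row_sum n x i = row_sum n y i) \<and> (\<forall>j<n. col_sum m x j = col_sum m y j)"

lemma row_sum_add: "row_sum n (x + y) i = row_sum n x i + row_sum n y i"
  by (simp add: row_sum_def lookup_add sum.distrib)

lemma col_sum_add: "col_sum m (x + y) j = col_sum m x j + col_sum m y j"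
  by (simp add: col_sum_def lookup_add sum.distrib)

lemma row_sum_single: "row_sum n (single (a, b) k) i = (if i = a \<and> b < n then k else 0)"
  by (auto simp: row_sum_def lookup_single when_def)

lemma col_sum_single: "col_sum m (single (a, b) k) j = (if j = b \<and> a < m then k else 0)"
  by (auto simp: col_sum_def lookup_single when_def)

lemma lookup_le_row_sum: "j < n \<Longrightarrow> lookup x (i, j) \<le> row_sum n x i"
  unfolding row_sum_def by (rule member_le_sum) auto

lemma lookup_le_col_sum: "i < m \<Longrightarrow> lookup x (i, j) \<le> col_sum m x j"
  unfolding col_sum_def by (rule member_le_sum) auto

lemma same_margins_add_left: "same_margins m n (z + x) (z + y) \<longleftrightarrow> same_margins m n x y"
  by (simp add: same_margins_def row_sum_add col_sum_add)

lemma config_deg_Kmn_row: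
  assumes "i < m"
  shows "config_deg (Kmn_edges m n) (Kmn_config m n) x i = int (row_sum n x i)"
proof -
  have "config_deg (Kmn_edges m n) (Kmn_config m n) x i
      = (\<Sum>a<m. \<Sum>b<n. int (lookup x (a, b)) * (if i = a \<or> i = m + b then 1 else 0))"
    by (simp add: config_deg_def Kmn_edges_def Kmn_config_def sum.cartesian_product split_def atLeast0LessThan)
  also have "\<dots> = (\<Sum>a<m. if a = i then (\<Sum>b<n. int (lookup x (a, b))) else 0)"
    using assms by (intro sum.cong refl) auto
  also have "\<dots> = int (row_sum n x i)" using assms by (simp add: row_sum_def)
  finally show ?thesis .
qed

lemma config_deg_Kmn_col:
  assumes "j < n"
  shows "config_deg (Kmn_edges m n) (Kmn_config m n) x (m + j) = int (col_sum m x j)"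
proof -
  have "config_deg (Kmn_edges m n) (Kmn_config m n) x (m + j)
      = (\<Sum>a<m. \<Sum>b<n. int (lookup x (a, b)) * (if m + j = a \<or> m + j = m + b then 1 else 0))"
    by (auto simp: config_deg_def Kmn_edges_def Kmn_config_def sum.cartesian_product split_def
        atLeast0LessThan intro!: sum.cong)
  also have "\<dots> = (\<Sum>b<n. \<Sum>a<m. int (lookup x (a, b)) * (if m + j = a \<or> m + j = m + b then 1 else 0))"
    by (rule sum.swap)
  also have "\<dots> = (\<Sum>b<n. if b = j then (\<Sum>a<m. int (lookup x (a, b))) else 0)"
    by (intro sum.cong refl) auto
  also have "\<dots> = int (col_sum m x j)" using assms by (simp add: col_sum_def)
  finally show ?thesis .
qed

lemma config_deg_Kmn_beyond:
  "m + n \<le> r \<Longrightarrow> config_deg (Kmn_edges m n) (Kmn_config m n) x r = 0"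
  by (auto simp: config_deg_def Kmn_edges_def Kmn_config_def intro!: sum.neutral)

lemma config_deg_Kmn_eq_iff:
  "config_deg (Kmn_edges m n) (Kmn_config m n) x = config_deg (Kmn_edges m n) (Kmn_config m n) y
    \<longleftrightarrow> same_margins m n x y"
proof
  assume "config_deg (Kmn_edges m n) (Kmn_config m n) x = config_deg (Kmn_edges m n) (Kmn_config m n) y"
  then show "same_margins m n x y"
    unfolding same_margins_def using config_deg_Kmn_row[of _ m n] config_deg_Kmn_col[of _ n m]
    by (metis of_nat_eq_iff)
next
  assume same: "same_margins m n x y"
  show "config_deg (Kmn_edges m n) (Kmn_config m n) x = config_deg (Kmn_edges m n) (Kmn_config m n) y"
  proof
    fix r
    consider "r < m" | j where "j < n" "r = m + j" | "m + n \<le> r"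
      by (metis add_diff_inverse_nat add_less_cancel_left not_less)
    then show "config_deg (Kmn_edges m n) (Kmn_config m n) x r = config_deg (Kmn_edges m n) (Kmn_config m n) y r"
      by cases (use same in \<open>simp_all add: same_margins_def config_deg_Kmn_row config_deg_Kmn_col config_deg_Kmn_beyond\<close>)
  qed
qed

section \<open>The \<open>2 \<times> 2\<close> minors\<close>

definition minor :: "nat \<Rightarrow> nat \<Rightarrow> nat \<Rightarrow> nat \<Rightarrow> (nat \<times> nat, 'k::field) mpoly" where
  "minor a b c d = single (single (a, c) 1 + single (b, d) 1) 1 - single (single (a, d) 1 + single (b, c) 1) 1"

definition minor_relation :: "(nat \<times> nat \<Rightarrow> nat \<Rightarrow> int) \<Rightarrow> nat \<Rightarrow> nat \<Rightarrow> nat \<Rightarrow> nat \<Rightarrow> bool" where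
  "minor_relation B a b c d \<longleftrightarrow> (\<forall>r. B (a, c) r + B (b, d) r = B (a, d) r + B (b, c) r)"

lemma minor_in_toric_ideal_iff:
  assumes "a < m" "b < m" "c < n" "d < n"
  shows "minor a b c d \<in> (toric_ideal (Kmn_edges m n) B :: (nat \<times> nat, 'k::field) mpoly set)
    \<longleftrightarrow> minor_relation B a b c d"
proof -
  have keys: "keys (single (a, c) (1::nat) + single (b, d) 1) \<subseteq> Kmn_edges m n"
    "keys (single (a, d) (1::nat) + single (b, c) 1) \<subseteq> Kmn_edges m n"
    using assms by (auto dest!: subsetD[OF keys_add])
  show ?thesis
    unfolding minor_def binomial_in_toric_ideal_iff[OF keys] minor_relation_def
    using assms by (simp add: fun_eq_iff config_deg_add config_deg_single)
qed

lemma minor_relation_Kmn: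
  "a < m \<Longrightarrow> b < m \<Longrightarrow> minor_relation (Kmn_config m n) a b c d"
  by (auto simp: minor_relation_def Kmn_config_def)

lemma minor_in_toric_ideal_Kmn:
  "a < m \<Longrightarrow> b < m \<Longrightarrow> c < n \<Longrightarrow> d < n \<Longrightarrow>
    minor a b c d \<in> (toric_ideal (Kmn_edges m n) (Kmn_config m n) :: (nat \<times> nat, 'k::field) mpoly set)"
  by (simp add: minor_in_toric_ideal_iff minor_relation_Kmn)

lemma single_add_rest: "1 \<le> lookup x v \<Longrightarrow> x = single v 1 + (x - single v (1::nat))"
  by (rule poly_mapping_eqI) (auto simp: lookup_add lookup_minus lookup_single when_def)

lemma keys_diff_single_subset: "keys (x - single v 1) \<subseteq> keys (x :: 'a \<Rightarrow>\<^sub>0 nat)"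
  by (auto simp: in_keys_iff lookup_minus)

lemma zero_if_row_sums_zero:
  assumes "keys x \<subseteq> Kmn_edges m n" "\<forall>i<m. row_sum n x i = 0"
  shows "x = 0"
proof (rule ccontr)
  assume "x \<noteq> 0"
  then obtain i j where ij: "(i, j) \<in> keys x" by (metis all_not_in_conv keys_eq_empty surj_pair)
  then have "i < m" "j < n" using assms(1) by auto
  then have "lookup x (i, j) = 0" using lookup_le_row_sum[of j n x i] assms(2) by simp
  then show False using ij by (simp add: in_keys_iff)
qed

lemma margin_exchange:
  assumes "same_margins m n u w" "i < m" "j < n" "1 \<le> lookup u (i, j)" "lookup w (i, j) = 0"
  obtains i' j' w' where "i' < m" "j' < n" "i' \<noteq> i" "j' \<noteq> j"
    and "w = single (i, j') 1 + single (i', j) 1 + w'"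
proof -
  have "row_sum n w i \<noteq> 0"
    using lookup_le_row_sum[OF assms(3), of u i] assms by (simp add: same_margins_def)
  then obtain j' where j': "j' < n" "1 \<le> lookup w (i, j')"
    by (auto simp: row_sum_def)
  have "col_sum m w j \<noteq> 0"
    using lookup_le_col_sum[OF assms(2), of u j] assms by (simp add: same_margins_def)
  then obtain i' where i': "i' < m" "1 \<le> lookup w (i', j)"
    by (auto simp: col_sum_def)
  have "j' \<noteq> j" "i' \<noteq> i" using i' j' assms(5) by auto
  define w1 where "w1 = w - single (i, j') 1"
  define w2 where "w2 = w1 - single (i', j) 1"
  have w: "w = single (i, j') 1 + w1"
    unfolding w1_def by (rule single_add_rest[OF j'(2)])
  have "1 \<le> lookup w1 (i', j)"
    using i'(2) \<open>i' \<noteq> i\<close> by (simp add: w1_def lookup_minus lookup_single)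
  then have "w1 = single (i', j) 1 + w2"
    unfolding w2_def by (rule single_add_rest)
  with w have "w = single (i, j') 1 + single (i', j) 1 + w2"
    by (simp add: add.assoc)
  then show ?thesis using that i'(1) j'(1) \<open>i' \<noteq> i\<close> \<open>j' \<noteq> j\<close> by blast
qed

lemma exchange_binomial_in_ideal:
  fixes J :: "(nat \<times> nat, 'k::field) mpoly set"
  assumes J: "is_ideal_in (Kmn_edges m n) J"
    and minors: "\<And>a b c d. a < m \<Longrightarrow> b < m \<Longrightarrow> c < n \<Longrightarrow> d < n \<Longrightarrow> minor a b c d \<in> J"
    and wV: "keys w \<subseteq> Kmn_edges m n" and margins: "same_margins m n u w"
    and i: "i < m" and j: "j < n" and "1 \<le> lookup u (i, j)" "lookup w (i, j) = 0"
  obtains t where "keys t \<subseteq> Kmn_edges m n" "same_margins m n u t" "1 \<le> lookup t (i, j)"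
    and "single t 1 - single w 1 \<in> J"
proof -
  obtain i' j' w' where i': "i' < m" "i' \<noteq> i" and j': "j' < n" "j' \<noteq> j"
    and w: "w = single (i, j') 1 + single (i', j) 1 + w'"
    using margin_exchange[OF margins i j assms(7,8)] by blast
  define t where "t = single (i, j) 1 + single (i', j') 1 + w'"
  have w'V: "keys w' \<subseteq> Kmn_edges m n"
    using wV unfolding w by (auto simp: in_keys_iff lookup_add)
  have "keys t \<subseteq> Kmn_edges m n"
    unfolding t_def using w'V i j i' j' by (auto dest!: subsetD[OF keys_add])
  moreover have "same_margins m n t w"
    using i j i' j' unfolding same_margins_def t_def w
    by (simp add: row_sum_add col_sum_add row_sum_single col_sum_single)
  then have "same_margins m n u t"
    using margins by (simp add: same_margins_def)
  moreover have "1 \<le> lookup t (i, j)" by (simp add: t_def lookup_add)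
  moreover have "single w' 1 * minor i i' j j' \<in> J"
    by (rule ideal_mult[OF J minors[OF i i'(1) j j'(1)] PR_single[OF w'V]])
  then have "single t 1 - single w 1 \<in> J"
    by (simp add: minor_def t_def w right_diff_distrib mult_single add_ac)
  ultimately show ?thesis using that by blast
qed

lemma same_margins_binomial_in_ideal:
  fixes J :: "(nat \<times> nat, 'k::field) mpoly set"
  assumes J: "is_ideal_in (Kmn_edges m n) J"
    and minors: "\<And>a b c d. a < m \<Longrightarrow> b < m \<Longrightarrow> c < n \<Longrightarrow> d < n \<Longrightarrow> minor a b c d \<in> J"
    and "keys u \<subseteq> Kmn_edges m n" "keys w \<subseteq> Kmn_edges m n" "same_margins m n u w"
  shows "single u 1 - single w 1 \<in> J"
  using assms(3-)
proof (induction "\<Sum>v\<in>Kmn_edges m n. lookup u v" arbitrary: u w rule: less_induct)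
  case less
  let ?V = "Kmn_edges m n"
  have common: "single u 1 - single w' 1 \<in> J"
    if "keys w' \<subseteq> ?V" "same_margins m n u w'" "v \<in> ?V" "1 \<le> lookup u v" "1 \<le> lookup w' v" for w' v
  proof -
    define u1 where "u1 = u - single v 1"
    define w1 where "w1 = w' - single v 1"
    have u: "u = single v 1 + u1"
      unfolding u1_def by (rule single_add_rest[OF that(4)])
    have w': "w' = single v 1 + w1"
      unfolding w1_def by (rule single_add_rest[OF that(5)])
    have "(\<Sum>x\<in>?V. lookup u x) = 1 + (\<Sum>x\<in>?V. lookup u1 x)"
      using that(3) by (simp add: u lookup_add sum.distrib lookup_single when_def)
    then have "(\<Sum>x\<in>?V. lookup u1 x) < (\<Sum>x\<in>?V. lookup u x)" by simp
    moreover have "keys u1 \<subseteq> ?V"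
      using keys_diff_single_subset[of u v] less.prems(1) unfolding u1_def by blast
    moreover have "keys w1 \<subseteq> ?V"
      using keys_diff_single_subset[of w' v] that(1) unfolding w1_def by blast
    moreover have "same_margins m n u1 w1"
      using that(2) u w' same_margins_add_left by metis
    ultimately have "single u1 1 - single w1 1 \<in> J" by (rule less.hyps)
    then have "single (single v 1 + u1) 1 - single (single v 1 + w1) 1 \<in> J"
      using that(3) by (intro ideal_shift_binomial[OF J]) simp_all
    then show ?thesis using u w' by simp
  qed
  show ?case
  proof (cases "\<exists>v\<in>?V. 1 \<le> lookup u v \<and> 1 \<le> lookup w v")
    case True
    then show ?thesis using common less.prems by blast
  next
    case disjoint: False
    show ?thesis
    proof (cases "u = 0")
      case True
      then have "\<forall>i<m. row_sum n w i = 0" using less.prems(3) by (simp add: same_margins_def row_sum_def)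
      then have "w = 0" using zero_if_row_sums_zero less.prems(2) by blast
      then show ?thesis using True ideal_zero[OF J] by simp
    next
      case False
      then obtain i j where ij: "(i, j) \<in> keys u" by (metis all_not_in_conv keys_eq_empty surj_pair)
      have i: "i < m" and j: "j < n" using ij less.prems(1) by auto
      have u_ij: "1 \<le> lookup u (i, j)" using ij by (simp add: in_keys_iff)
      have "(i, j) \<in> ?V" using i j by simp
      then have "lookup w (i, j) = 0" using disjoint u_ij by auto
      then obtain t where tV: "keys t \<subseteq> ?V" and "same_margins m n u t" "1 \<le> lookup t (i, j)"
        and tw: "single t 1 - single w 1 \<in> J"
        using exchange_binomial_in_ideal[OF J minors less.prems(2,3) i j u_ij] by blast
      then have "single u 1 - single t 1 \<in> J"
        using common[OF tV _ \<open>(i, j) \<in> ?V\<close> u_ij] by blast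
      from ideal_add[OF J this tw] show ?thesis by simp
    qed
  qed
qed

lemma toric_ideal_Kmn_subsetI:
  assumes "is_ideal_in (Kmn_edges m n) J"
    and "\<And>a b c d. a < m \<Longrightarrow> b < m \<Longrightarrow> c < n \<Longrightarrow> d < n \<Longrightarrow> minor a b c d \<in> J"
  shows "toric_ideal (Kmn_edges m n) (Kmn_config m n) \<subseteq> J"
  using assms by (intro toric_ideal_subsetI same_margins_binomial_in_ideal) (simp_all add: config_deg_Kmn_eq_iff)

section \<open>A splitting into three toric ideals\<close>

definition mark_config :: "nat \<Rightarrow> nat \<Rightarrow> nat \<times> nat \<Rightarrow> nat \<times> nat \<Rightarrow> nat \<Rightarrow> int" where
  "mark_config m n E v r = Kmn_config m n v r + (if v = E \<and> r = m + n then 1 else 0)"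

lemma toric_config_mark_config: "toric_config (Kmn_edges m n) (mark_config m n E)"
  by (rule toric_config_nonneg[where d = "m + n + 1"]) (auto simp: Kmn_edges_def Kmn_config_def mark_config_def)

lemma toric_ideal_mark_config_subset:
  "toric_ideal (Kmn_edges m n) (mark_config m n E) \<subseteq> toric_ideal (Kmn_edges m n) (Kmn_config m n)"
proof (rule toric_ideal_subsetI[OF is_ideal_in_toric_ideal])
  fix u w assume u: "keys u \<subseteq> Kmn_edges m n" and w: "keys w \<subseteq> Kmn_edges m n"
    and eq: "config_deg (Kmn_edges m n) (mark_config m n E) u = config_deg (Kmn_edges m n) (mark_config m n E) w"
  have "config_deg (Kmn_edges m n) (Kmn_config m n) x r = config_deg (Kmn_edges m n) (mark_config m n E) x r"
    if "r \<noteq> m + n" for x r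
    using that by (simp add: config_deg_def mark_config_def)
  then have "config_deg (Kmn_edges m n) (Kmn_config m n) u r = config_deg (Kmn_edges m n) (Kmn_config m n) w r" for r
    using eq by (cases "r = m + n") (simp_all add: config_deg_Kmn_beyond)
  then show "single u 1 - single w 1 \<in> toric_ideal (Kmn_edges m n) (Kmn_config m n)"
    using binomial_in_toric_ideal[OF u w] by blast
qed

lemma minor_in_toric_ideal_mark_config:
  assumes "a < m" "b < m" "c < n" "d < n" "E \<notin> {(a, c), (b, d), (a, d), (b, c)}"
  shows "minor a b c d \<in> (toric_ideal (Kmn_edges m n) (mark_config m n E) :: (nat \<times> nat, 'k::field) mpoly set)"
  using assms minor_relation_Kmn[of a m b n c d]
  by (auto simp: minor_in_toric_ideal_iff minor_relation_def mark_config_def)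

lemma minor_notin_toric_ideal_mark_config:
  assumes "a < m" "b < m" "c < n" "d < n" "a \<noteq> b" "c \<noteq> d"
  shows "minor a b c d \<notin> (toric_ideal (Kmn_edges m n) (mark_config m n (a, c)) :: (nat \<times> nat, 'k::field) mpoly set)"
proof -
  have "\<not> minor_relation (mark_config m n (a, c)) a b c d"
    using assms unfolding minor_relation_def by (auto simp: mark_config_def Kmn_config_def intro!: exI[of _ "m + n"])
  then show ?thesis using assms by (simp add: minor_in_toric_ideal_iff)
qed

lemma toric_ideal_mark_config_proper:
  assumes "m \<ge> 2" "n \<ge> 2" "E \<in> Kmn_edges m n"
  shows "(toric_ideal (Kmn_edges m n) (mark_config m n E) :: (nat \<times> nat, 'k::field) mpoly set)
    \<noteq> toric_ideal (Kmn_edges m n) (Kmn_config m n)"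
proof -
  obtain a c where ac: "E = (a, c)" "a < m" "c < n" using assms(3) by (cases E) auto
  define b :: nat where "b = (if a = 0 then 1 else 0)"
  define d :: nat where "d = (if c = 0 then 1 else 0)"
  have bd: "b < m" "a \<noteq> b" "d < n" "c \<noteq> d" using assms by (auto simp: b_def d_def)
  have "minor a b c d \<in> (toric_ideal (Kmn_edges m n) (Kmn_config m n) :: (nat \<times> nat, 'k) mpoly set)"
    using ac bd by (intro minor_in_toric_ideal_Kmn)
  moreover have "minor a b c d \<notin> (toric_ideal (Kmn_edges m n) (mark_config m n E) :: (nat \<times> nat, 'k) mpoly set)"
    unfolding ac(1) using ac bd by (intro minor_notin_toric_ideal_mark_config)
  ultimately show ?thesis by blast
qed

lemma ex_less_3_avoiding: "\<exists>l<3. l \<noteq> x \<and> l \<noteq> (y :: nat)"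
  by presburger

lemma Kmn_splits_into_3:
  assumes "m \<ge> 2" "n \<ge> 2" "(m, n) \<noteq> (2, 2)"
  shows "splits_into TYPE('k::field) (Kmn_edges m n) (Kmn_config m n) 3"
proof -
  let ?V = "Kmn_edges m n"
  let ?I = "toric_ideal ?V (Kmn_config m n) :: (nat \<times> nat, 'k) mpoly set"
  \<comment> \<open>three edges in one row (in one column if \<open>n = 2\<close>): every minor avoids one of them\<close>
  define E where "E l = (if 3 \<le> n then (0, l) else (l, 0))" for l :: nat
  define As where "As l = mark_config m n (E l)" for l
  let ?J = "ideal_gen ?V (\<Union>l<3. toric_ideal ?V (As l)) :: (nat \<times> nat, 'k) mpoly set"
  have "?I \<subseteq> ?J"
  proof (rule toric_ideal_Kmn_subsetI)
    show "is_ideal_in ?V ?J"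
      using toric_ideal_subset_PR by (intro is_ideal_in_ideal_gen) blast
    fix a b c d assume abcd: "a < m" "b < m" "c < n" "d < n"
    obtain l where l: "l < 3" "E l \<notin> {(a, c), (b, d), (a, d), (b, c)}"
    proof (cases "3 \<le> n")
      case True
      obtain l :: nat where "l < 3" "l \<noteq> c" "l \<noteq> d" using ex_less_3_avoiding by blast
      then show ?thesis using that True by (auto simp: E_def)
    next
      case False
      obtain l :: nat where "l < 3" "l \<noteq> a" "l \<noteq> b" using ex_less_3_avoiding by blast
      then show ?thesis using that False by (auto simp: E_def)
    qed
    then have "minor a b c d \<in> (\<Union>l<3. toric_ideal ?V (As l))"
      unfolding As_def using abcd by (blast intro: minor_in_toric_ideal_mark_config)
    then show "minor a b c d \<in> ?J" by (rule subsetD[OF ideal_gen_subset])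
  qed
  moreover have "?J \<subseteq> ?I"
    unfolding As_def by (intro ideal_gen_least[OF is_ideal_in_toric_ideal] UN_least toric_ideal_mark_config_subset)
  ultimately have "?I = ?J" by (rule subset_antisym)
  moreover have "toric_ideal ?V (As l) \<noteq> ?I" if "l < 3" for l
    unfolding As_def using assms that by (intro toric_ideal_mark_config_proper) (auto simp: E_def)
  ultimately show ?thesis
    unfolding splits_into_def using toric_config_mark_config by (intro exI[of _ As]) (auto simp: As_def)
qed

section \<open>No splitting into two toric ideals\<close>

lemma covered_by_two_equivalences:
  assumes cover: "\<forall>x\<in>S. \<forall>y\<in>S. R x y \<or> Q x y"
    and R: "symp R" "transp R" and Q: "symp Q" "transp Q"
  shows "(\<forall>x\<in>S. \<forall>y\<in>S. R x y) \<or> (\<forall>x\<in>S. \<forall>y\<in>S. Q x y)"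
proof (rule disjCI)
  assume "\<not> (\<forall>x\<in>S. \<forall>y\<in>S. Q x y)"
  then obtain c d where cd: "c \<in> S" "d \<in> S" "\<not> Q c d" by blast
  then have "R c d" using cover by blast
  have Rc: "R x c" if x: "x \<in> S" for x
  proof (rule ccontr)
    assume "\<not> R x c"
    then have "Q x c" using cover x cd(1) by blast
    have "\<not> Q x d"
    proof
      assume "Q x d"
      then have "Q c d" by (rule transpD[OF Q(2) sympD[OF Q(1) \<open>Q x c\<close>]])
      then show False using cd(3) by contradiction
    qed
    then have "R x d" using cover x cd(2) by blast
    then have "R x c" by (rule transpD[OF R(2) _ sympD[OF R(1) \<open>R c d\<close>]])
    then show False using \<open>\<not> R x c\<close> by contradiction
  qed
  show "\<forall>x\<in>S. \<forall>y\<in>S. R x y"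
    using transpD[OF R(2) Rc sympD[OF R(1) Rc]] by blast
qed

definition satisfies_all_minors :: "nat \<Rightarrow> nat \<Rightarrow> (nat \<times> nat \<Rightarrow> nat \<Rightarrow> int) \<Rightarrow> bool" where
  "satisfies_all_minors m n B \<longleftrightarrow> (\<forall>a<m. \<forall>b<m. \<forall>c<n. \<forall>d<n. minor_relation B a b c d)"

lemma symp_minor_relation_cols: "symp (minor_relation B a b)"
  by (rule sympI) (simp add: minor_relation_def add.commute)

lemma transp_minor_relation_cols: "transp (minor_relation B a b)"
proof (rule transpI)
  fix c d e assume "minor_relation B a b c d" "minor_relation B a b d e"
  then have "B (a, c) r + B (b, d) r = B (a, d) r + B (b, c) r"
    "B (a, d) r + B (b, e) r = B (a, e) r + B (b, d) r" for r
    by (simp_all add: minor_relation_def)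
  then show "minor_relation B a b c e"
    unfolding minor_relation_def by (smt (verit))
qed

lemma symp_minor_relation_rows: "symp (\<lambda>a b. \<forall>c<n. \<forall>d<n. minor_relation B a b c d)"
  by (rule sympI) (simp add: minor_relation_def add.commute)

lemma transp_minor_relation_rows: "transp (\<lambda>a b. \<forall>c<n. \<forall>d<n. minor_relation B a b c d)"
proof (rule transpI, intro allI impI)
  fix a b e c d
  assume "\<forall>c<n. \<forall>d<n. minor_relation B a b c d" "\<forall>c<n. \<forall>d<n. minor_relation B b e c d"
    and "c < n" "d < n"
  then have "B (a, c) r + B (b, d) r = B (a, d) r + B (b, c) r"
    "B (b, c) r + B (e, d) r = B (b, d) r + B (e, c) r" for r
    by (simp_all add: minor_relation_def)
  then show "minor_relation B a e c d"
    unfolding minor_relation_def by (smt (verit))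
qed

lemma satisfies_all_minors_cover:
  assumes cover: "\<forall>a<m. \<forall>b<m. \<forall>c<n. \<forall>d<n. minor_relation B0 a b c d \<or> minor_relation B1 a b c d"
  shows "satisfies_all_minors m n B0 \<or> satisfies_all_minors m n B1"
proof -
  have "(\<forall>c\<in>{..<n}. \<forall>d\<in>{..<n}. minor_relation B0 a b c d) \<or> (\<forall>c\<in>{..<n}. \<forall>d\<in>{..<n}. minor_relation B1 a b c d)"
    if "a < m" "b < m" for a b
    using that cover by (intro covered_by_two_equivalences symp_minor_relation_cols transp_minor_relation_cols) auto
  then have "(\<forall>a\<in>{..<m}. \<forall>b\<in>{..<m}. \<forall>c<n. \<forall>d<n. minor_relation B0 a b c d)
      \<or> (\<forall>a\<in>{..<m}. \<forall>b\<in>{..<m}. \<forall>c<n. \<forall>d<n. minor_relation B1 a b c d)"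
    by (intro covered_by_two_equivalences symp_minor_relation_rows transp_minor_relation_rows) auto
  then show ?thesis by (auto simp: satisfies_all_minors_def)
qed

lemma toric_ideal_Kmn_subset_if_satisfies_all_minors:
  "satisfies_all_minors m n B \<Longrightarrow>
    toric_ideal (Kmn_edges m n) (Kmn_config m n) \<subseteq> (toric_ideal (Kmn_edges m n) B :: (nat \<times> nat, 'k::field) mpoly set)"
  by (intro toric_ideal_Kmn_subsetI is_ideal_in_toric_ideal) (simp add: satisfies_all_minors_def minor_in_toric_ideal_iff)

lemma common_violated_minor:
  fixes Bs :: "nat \<Rightarrow> nat \<times> nat \<Rightarrow> nat \<Rightarrow> int"
  assumes "m \<ge> 2" "n \<ge> 2" "s < 3" and violated: "\<And>i. i < s \<Longrightarrow> \<not> satisfies_all_minors m n (Bs i)"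
  obtains a b c d where "a < m" "b < m" "c < n" "d < n" "a \<noteq> b" "c \<noteq> d"
    and "\<And>i. i < s \<Longrightarrow> \<not> minor_relation (Bs i) a b c d"
proof (cases "s = 0")
  case True
  then show ?thesis using assms(1,2) by (intro that[of 0 1 0 1]) auto
next
  case False
  then have "0 < s" "s - 1 < s" by auto
  then have "\<not> (\<forall>a<m. \<forall>b<m. \<forall>c<n. \<forall>d<n. minor_relation (Bs 0) a b c d \<or> minor_relation (Bs (s - 1)) a b c d)"
    using satisfies_all_minors_cover[of m n "Bs 0" "Bs (s - 1)"] violated by blast
  then obtain a b c d where abcd: "a < m" "b < m" "c < n" "d < n"
    and violated_ends: "\<not> minor_relation (Bs 0) a b c d" "\<not> minor_relation (Bs (s - 1)) a b c d"
    by blast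
  then have "a \<noteq> b" "c \<noteq> d" by (auto simp: minor_relation_def)
  moreover have "\<not> minor_relation (Bs i) a b c d" if "i < s" for i
  proof -
    have "i = 0 \<or> i = s - 1" using that assms(3) by linarith
    then show ?thesis using violated_ends by blast
  qed
  ultimately show ?thesis using that abcd by blast
qed

definition antidiag_monomial :: "nat \<Rightarrow> nat \<Rightarrow> nat \<Rightarrow> nat \<Rightarrow> nat \<Rightarrow> (nat \<times> nat \<Rightarrow>\<^sub>0 nat)" where
  "antidiag_monomial a b c d k = single (a, d) k + single (b, c) k"

lemma power_antidiag_monomial:
  "(- single (antidiag_monomial a b c d 1) 1) ^ k = single (antidiag_monomial a b c d k) ((-1) ^ k :: 'k::field)"
proof (induction k)
  case 0
  then show ?case by (simp add: antidiag_monomial_def)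
next
  case (Suc k)
  have "single v (Suc k) = single v 1 + single v k" for v :: "nat \<times> nat"
    by (simp add: single_add[symmetric])
  then have "antidiag_monomial a b c d 1 + antidiag_monomial a b c d k = antidiag_monomial a b c d (Suc k)"
    by (simp only: antidiag_monomial_def add_ac)
  with Suc show ?case by (simp add: mult_single single_uminus[symmetric])
qed

lemma lookup_minor_power:
  assumes "a \<noteq> b" "c \<noteq> d"
  shows "lookup (minor a b c d ^ k) (antidiag_monomial a b c d k) = ((-1) ^ k :: 'k::field)"
proof -
  define D where "D = single (a, c) 1 + single (b, d) (1::nat)"
  let ?X = "single D 1 :: (nat \<times> nat, 'k) mpoly"
  let ?Y = "single (antidiag_monomial a b c d 1) 1 :: (nat \<times> nat, 'k) mpoly"
  have minor: "minor a b c d = ?X - ?Y" by (simp add: minor_def D_def antidiag_monomial_def)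
  define q where "q = (\<Sum>i<k. (- ?Y) ^ (k - Suc i) * minor a b c d ^ i)"
  have "minor a b c d ^ k - (- ?Y) ^ k = ?X * q"
    unfolding power_diff_sumr2 q_def by (simp add: minor)
  then have q: "minor a b c d ^ k = ?X * q + (- ?Y) ^ k"
    by (simp only: diff_eq_eq)
  have "antidiag_monomial a b c d k \<notin> keys (?X * q)"
  proof
    assume "antidiag_monomial a b c d k \<in> keys (?X * q)"
    then obtain y where "antidiag_monomial a b c d k = D + y"
      using keys_mult[of ?X q] by auto
    then have "lookup (antidiag_monomial a b c d k) (a, c) \<ge> 1"
      by (simp add: D_def lookup_add)
    then show False using assms by (simp add: antidiag_monomial_def lookup_add lookup_single)
  qed
  then show ?thesis
    unfolding q lookup_add power_antidiag_monomial by (simp add: in_keys_iff)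
qed

lemma keys_antidiag_monomial:
  "a < m \<Longrightarrow> b < m \<Longrightarrow> c < n \<Longrightarrow> d < n \<Longrightarrow> keys (antidiag_monomial a b c d k) \<subseteq> Kmn_edges m n"
  by (auto simp: antidiag_monomial_def split: if_splits dest!: subsetD[OF keys_add])

lemma row_sum_antidiag_monomial:
  "c < n \<Longrightarrow> d < n \<Longrightarrow> row_sum n (antidiag_monomial a b c d k) i = (k when i = a) + (k when i = b)"
  by (simp add: antidiag_monomial_def row_sum_add row_sum_single when_def)

lemma col_sum_antidiag_monomial:
  "a < m \<Longrightarrow> b < m \<Longrightarrow> col_sum m (antidiag_monomial a b c d k) j = (k when j = d) + (k when j = c)"
  by (simp add: antidiag_monomial_def col_sum_add col_sum_single when_def)

lemma same_margins_antidiag_monomial_support: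
  assumes "a < m" "b < m" "c < n" "d < n"
    and "keys y \<subseteq> Kmn_edges m n" "same_margins m n y (antidiag_monomial a b c d k)"
    and "lookup y (i, j) \<noteq> 0"
  shows "(i = a \<or> i = b) \<and> (j = c \<or> j = d)"
proof -
  have "(i, j) \<in> keys y" using assms(7) by (simp add: in_keys_iff)
  then have ij: "i < m" "j < n" using assms(5) by auto
  have "0 < row_sum n y i" "0 < col_sum m y j"
    using lookup_le_row_sum[OF ij(2), of y i] lookup_le_col_sum[OF ij(1), of y j] assms(7) by linarith+
  then show ?thesis
    using assms(6) ij assms(1-4)
    by (auto simp: same_margins_def row_sum_antidiag_monomial col_sum_antidiag_monomial when_def split: if_splits)
qed

lemma same_margins_antidiag_monomial:
  assumes abcd: "a < m" "b < m" "c < n" "d < n" "a \<noteq> b" "c \<noteq> d"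
    and y: "keys y \<subseteq> Kmn_edges m n" and margins: "same_margins m n y (antidiag_monomial a b c d k)"
  obtains p where "p \<le> k"
    and "y = single (a, c) p + single (b, d) p + single (a, d) (k - p) + single (b, c) (k - p)"
proof -
  define p where "p = lookup y (a, c)"
  define q1 where "q1 = lookup y (a, d)"
  define q2 where "q2 = lookup y (b, c)"
  define q3 where "q3 = lookup y (b, d)"
  have y_eq: "y = single (a, c) p + single (a, d) q1 + single (b, c) q2 + single (b, d) q3"
  proof (rule poly_mapping_eqI)
    fix v :: "nat \<times> nat"
    obtain i j where v: "v = (i, j)" by fastforce
    show "lookup y v = lookup (single (a, c) p + single (a, d) q1 + single (b, c) q2 + single (b, d) q3) v"
      using same_margins_antidiag_monomial_support[OF abcd(1-4) y margins, of i j] abcd(5,6)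
      unfolding v p_def q1_def q2_def q3_def
      by (cases "lookup y (i, j) = 0") (auto simp: lookup_add lookup_single when_def)
  qed
  have "row_sum n y a = p + q1" "row_sum n y b = q2 + q3" "col_sum m y c = p + q2"
    using abcd by (simp_all add: y_eq row_sum_add col_sum_add row_sum_single col_sum_single)
  then have "p + q1 = k" "q2 + q3 = k" "p + q2 = k"
    using margins abcd
    by (simp_all add: same_margins_def row_sum_antidiag_monomial col_sum_antidiag_monomial when_def)
  then have "p \<le> k" "q1 = k - p" "q2 = k - p" "q3 = p" by linarith+
  then show ?thesis using that y_eq by (simp add: add_ac)
qed

text \<open>If \<open>I\<^sub>B \<subseteq> I\<^sub>A\<close>, the \<open>B\<close>-fibre of \<open>(x_ad x_bc)^k\<close> lies in its \<open>A\<close>-fibre, which consists of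
  the monomials \<open>(x_ac x_bd)^p (x_ad x_bc)^(k - p)\<close>; a violated minor relation separates their
  \<open>B\<close>-degrees unless \<open>p = 0\<close>.\<close>

lemma config_deg_eq_antidiag_monomial:
  assumes abcd: "a < m" "b < m" "c < n" "d < n" "a \<noteq> b" "c \<noteq> d"
    and violated: "\<not> minor_relation B a b c d"
    and subset: "toric_ideal (Kmn_edges m n) B
      \<subseteq> (toric_ideal (Kmn_edges m n) (Kmn_config m n) :: (nat \<times> nat, 'k::field) mpoly set)"
    and y: "keys y \<subseteq> Kmn_edges m n"
    and deg: "config_deg (Kmn_edges m n) B y = config_deg (Kmn_edges m n) B (antidiag_monomial a b c d k)"
  shows "y = antidiag_monomial a b c d k"
proof -
  let ?V = "Kmn_edges m n"
  let ?W = "antidiag_monomial a b c d k"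
  note WV = keys_antidiag_monomial[OF abcd(1-4)]
  have "(single y 1 - single ?W 1 :: (nat \<times> nat, 'k) mpoly) \<in> toric_ideal ?V (Kmn_config m n)"
    using subset binomial_in_toric_ideal[OF y WV deg] by blast
  then have "same_margins m n y ?W"
    by (simp add: binomial_in_toric_ideal_iff[OF y WV] config_deg_Kmn_eq_iff)
  then obtain p where p: "p \<le> k"
    and y_eq: "y = single (a, c) p + single (b, d) p + single (a, d) (k - p) + single (b, c) (k - p)"
    using same_margins_antidiag_monomial[OF abcd y] by blast
  obtain r where r: "B (a, c) r + B (b, d) r \<noteq> B (a, d) r + B (b, c) r"
    using violated by (auto simp: minor_relation_def)
  have single: "config_deg ?V B (single v j) r = int j * B v r" if "v \<in> ?V" for v j
    using that by (simp add: config_deg_single)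
  have "config_deg ?V B y r = int p * (B (a, c) r + B (b, d) r) + int (k - p) * (B (a, d) r + B (b, c) r)"
    using abcd by (simp add: y_eq config_deg_add single algebra_simps)
  moreover have "config_deg ?V B ?W r = (int p + int (k - p)) * (B (a, d) r + B (b, c) r)"
    using abcd p by (simp add: antidiag_monomial_def config_deg_add single algebra_simps)
  ultimately have "int p * ((B (a, c) r + B (b, d) r) - (B (a, d) r + B (b, c) r)) = 0"
    using deg by (simp add: algebra_simps)
  then have "p = 0" using r by simp
  then show ?thesis by (simp add: y_eq antidiag_monomial_def)
qed

lemma deg_saturated_antidiag_monomial:
  assumes "a < m" "b < m" "c < n" "d < n" "a \<noteq> b" "c \<noteq> d"
    and "\<not> minor_relation B a b c d"
    and "toric_ideal (Kmn_edges m n) B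
      \<subseteq> (toric_ideal (Kmn_edges m n) (Kmn_config m n) :: (nat \<times> nat, 'k::field) mpoly set)"
  shows "deg_saturated (Kmn_edges m n) B {antidiag_monomial a b c d k}"
  unfolding deg_saturated_def
proof (intro allI impI)
  fix x y assume "keys x \<subseteq> Kmn_edges m n" "keys y \<subseteq> Kmn_edges m n"
    and "config_deg (Kmn_edges m n) B x = config_deg (Kmn_edges m n) B y"
  then show "x \<in> {antidiag_monomial a b c d k} \<longleftrightarrow> y \<in> {antidiag_monomial a b c d k}"
    using config_deg_eq_antidiag_monomial[OF assms] by auto
qed

lemma subset_radical_in_ideal_gen: "S \<subseteq> PR V \<Longrightarrow> S \<subseteq> radical_in V (ideal_gen V S)"
  unfolding radical_in_def using ideal_gen_subset by (fastforce intro: exI[of _ 1])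

lemma splits_into_imp_rad_splits_into:
  assumes "radical_in V (toric_ideal V A :: ('v, 'k::field) mpoly set) = toric_ideal V A"
  shows "splits_into TYPE('k) V A s \<Longrightarrow> rad_splits_into TYPE('k) V A s"
  unfolding splits_into_def rad_splits_into_def using assms by metis

lemma Kmn_not_rad_splits_into:
  assumes "m \<ge> 2" "n \<ge> 2" "s < 3"
  shows "\<not> rad_splits_into TYPE('k::field) (Kmn_edges m n) (Kmn_config m n) s"
proof
  let ?V = "Kmn_edges m n"
  let ?I = "toric_ideal ?V (Kmn_config m n) :: (nat \<times> nat, 'k) mpoly set"
  assume "rad_splits_into TYPE('k) ?V (Kmn_config m n) s"
  then obtain Bs :: "nat \<Rightarrow> nat \<times> nat \<Rightarrow> nat \<Rightarrow> int" where
    proper: "\<And>i. i < s \<Longrightarrow> (toric_ideal ?V (Bs i) :: (nat \<times> nat, 'k) mpoly set) \<noteq> ?I" and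
    eq: "?I = radical_in ?V (ideal_gen ?V (\<Union>i<s. toric_ideal ?V (Bs i)))"
    unfolding rad_splits_into_def by blast
  have subset: "toric_ideal ?V (Bs i) \<subseteq> ?I" if "i < s" for i
    using that subset_radical_in_ideal_gen[of "\<Union>i<s. toric_ideal ?V (Bs i)" ?V] toric_ideal_subset_PR
    unfolding eq by blast
  have "\<not> satisfies_all_minors m n (Bs i)" if "i < s" for i
    using proper[OF that] subset[OF that] toric_ideal_Kmn_subset_if_satisfies_all_minors by blast
  then obtain a b c d where abcd: "a < m" "b < m" "c < n" "d < n" "a \<noteq> b" "c \<noteq> d"
    and violated: "\<And>i. i < s \<Longrightarrow> \<not> minor_relation (Bs i) a b c d"
    using common_violated_minor[OF assms] by metis
  have "minor a b c d \<in> ?I" by (rule minor_in_toric_ideal_Kmn[OF abcd(1-4)])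
  then obtain k where "(minor a b c d ^ k :: (nat \<times> nat, 'k) mpoly) \<in> ideal_gen ?V (\<Union>i<s. toric_ideal ?V (Bs i))"
    using eq by (auto simp: radical_in_def)
  then have "minor a b c d ^ k \<in> (fibre_balanced ?V (Bs ` {..<s}) :: (nat \<times> nat, 'k) mpoly set)"
    using ideal_gen_toric_ideals_subset_fibre_balanced by blast
  moreover have "\<forall>B\<in>Bs ` {..<s}. deg_saturated ?V B {antidiag_monomial a b c d k}"
    using deg_saturated_antidiag_monomial[OF abcd violated subset] by blast
  ultimately have "coeff_sum {antidiag_monomial a b c d k} (minor a b c d ^ k :: (nat \<times> nat, 'k) mpoly) = 0"
    by (simp add: fibre_balanced_def)
  then show False
    by (simp add: coeff_sum_singleton lookup_minor_power[OF abcd(5,6)])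
qed

theorem theorem3p3:
  fixes m n :: nat
  assumes "m \<ge> 2" and "n \<ge> 2" and "(m, n) \<noteq> (2, 2)"
  shows "(\<exists>s. splits_into TYPE('k::field) (Kmn_edges m n) (Kmn_config m n) s)
       \<and> split_number TYPE('k) (Kmn_edges m n) (Kmn_config m n) = 3
       \<and> (\<exists>r. rad_splits_into TYPE('k) (Kmn_edges m n) (Kmn_config m n) r)
       \<and> rad_split_number TYPE('k) (Kmn_edges m n) (Kmn_config m n) = 3"
proof -
  have split: "splits_into TYPE('k) (Kmn_edges m n) (Kmn_config m n) 3"
    by (rule Kmn_splits_into_3[OF assms])
  have rad_split: "rad_splits_into TYPE('k) (Kmn_edges m n) (Kmn_config m n) s"
    if "splits_into TYPE('k) (Kmn_edges m n) (Kmn_config m n) s" for s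
    using splits_into_imp_rad_splits_into[OF radical_toric_ideal[OF toric_config_Kmn] that] .
  have rad_lower: "3 \<le> r" if "rad_splits_into TYPE('k) (Kmn_edges m n) (Kmn_config m n) r" for r
    using Kmn_not_rad_splits_into[OF assms(1,2)] that not_less by blast
  have "split_number TYPE('k) (Kmn_edges m n) (Kmn_config m n) = 3"
    unfolding split_number_def by (rule Least_equality, rule split, erule rad_lower[OF rad_split])
  moreover have "rad_split_number TYPE('k) (Kmn_edges m n) (Kmn_config m n) = 3"
    unfolding rad_split_number_def by (rule Least_equality, rule rad_split[OF split], erule rad_lower)
  ultimately show ?thesis using split rad_split[OF split] by blast
qed

end
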